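(* Let $n>1$, $1\le k\le\lceil\log_2 n\rceil$ and $p\in[0,1]$. Any (possibly randomized) algorithm for Locate that runs in $k$ rounds and succeeds with probability at least $p$ on every input of size $n$ issues, on its worst-case input, at least $\frac{k}{4e}\,p\,n^{1/k}-1-pk$ queries in expectation.
   Context: Locate problem in the rank query model: there is a vector $\vec{x}=(x_1,\ldots,x_n)$ whose ranks form an unknown permutation of $\{1,\ldots,n\}$; an index $i$ is given and the goal is to output $\mathrm{rank}(x_i)$. Queries have the form "How is $\mathrm{rank}(x_j)$ compared to $m$?", with answer "$<$", "$=$" or "$>$". An algorithm runs in $k$ rounds if in each of $k$ rounds it submits a set of queries chosen depending only on answers of earlier rounds (and its randomness), then receives all answers. A randomized algorithm is a distribution over deterministic algorithms; the expectation is over its randomness. *)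

theory Defs
  imports "HOL-Probability.Probability"
begin

datatype cmp = Lt | Eq | Gt

definition cmp_nat :: "nat \<Rightarrow> nat \<Rightarrow> cmp" where
  "cmp_nat a b = (if a < b then Lt else if a = b then Eq else Gt)"

text \<open>A hidden input is the rank function sigma: index j (j < n) has rank sigma j in {1..n}.
  Outside {..<n} sigma is normalised to 0.\<close>
definition inputs :: "nat \<Rightarrow> (nat \<Rightarrow> nat) set" where
  "inputs n = {\<sigma>. bij_betw \<sigma> {..<n} {1..n} \<and> (\<forall>j\<ge>n. \<sigma> j = 0)}"

definition answer :: "(nat \<Rightarrow> nat) \<Rightarrow> nat \<times> nat \<Rightarrow> cmp" where
  "answer \<sigma> q = cmp_nat (\<sigma> (fst q)) (snd q)"

text \<open>A deterministic round-based algorithm: in round r, given the target index i and the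
  table of all answers received in earlier rounds, it submits a set of queries;
  at the end it outputs a value from i and the final answer table.\<close>
datatype alg = Alg
  (queries: "nat \<Rightarrow> nat \<Rightarrow> (nat \<times> nat \<rightharpoonup> cmp) \<Rightarrow> (nat \<times> nat) set")
  (out: "nat \<Rightarrow> (nat \<times> nat \<rightharpoonup> cmp) \<Rightarrow> nat")

definition valid_alg :: "alg \<Rightarrow> bool" where
  "valid_alg A = (\<forall>r i h. finite (queries A r i h))"

fun hist :: "alg \<Rightarrow> (nat \<Rightarrow> nat) \<Rightarrow> nat \<Rightarrow> nat \<Rightarrow> (nat \<times> nat \<rightharpoonup> cmp)" where
  "hist A \<sigma> i 0 = Map.empty"
| "hist A \<sigma> i (Suc r) =
     (let h = hist A \<sigma> i r
      in h ++ (\<lambda>q. if q \<in> queries A r i h then Some (answer \<sigma> q) else None))"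

definition cost :: "alg \<Rightarrow> nat \<Rightarrow> (nat \<Rightarrow> nat) \<Rightarrow> nat \<Rightarrow> nat" where
  "cost A k \<sigma> i = (\<Sum>r<k. card (queries A r i (hist A \<sigma> i r)))"

definition succeeds :: "alg \<Rightarrow> nat \<Rightarrow> (nat \<Rightarrow> nat) \<Rightarrow> nat \<Rightarrow> bool" where
  "succeeds A k \<sigma> i = (out A i (hist A \<sigma> i k) = \<sigma> i)"

end

theory Submission
  imports Defs
begin

(* Restrict to the hard inputs hard_input n v (1 <= v <= n), in which x_0 has rank v and the
   other elements occupy the remaining ranks in increasing order, with target index 0. On them a
   query distinguishes v from v + 1 for at most two values of v, so a round of c queries splits a
   set of candidates sharing their history into at most 2c + 1 classes. By induction on the
   number m of remaining rounds, a deterministic algorithm that succeeds on s of the x candidates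
   of such a set spends at least s * query_bound m x - x queries on them in total; the induction
   step is Young's inequality. Averaging over the randomness and over v then yields one hard
   input with large expected cost. *)

lemma card_image_le_card_changes:
  fixes f :: "nat \<Rightarrow> 'a"
  assumes "finite B" and changes: "\<And>u. f (Suc u) \<noteq> f u \<Longrightarrow> u \<in> B"
  shows "card (f ` V) \<le> card B + 1"
proof -
  define W where "W = insert 0 (Suc ` B)"
  have "f v \<in> f ` W" for v
  proof -
    define w where "w = Max {u \<in> W. u \<le> v}"
    have fin: "finite {u \<in> W. u \<le> v}" and "0 \<in> {u \<in> W. u \<le> v}"
      using assms(1) by (auto simp: W_def)
    then have "w \<in> W" "w \<le> v"
      using Max_in unfolding w_def by blast+
    have "f w = f v"
      using \<open>w \<le> v\<close>
    proof (induction v rule: dec_induct)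
      case (step u)
      have "u \<notin> B"
      proof
        assume "u \<in> B"
        then have "Suc u \<le> w"
          using step.hyps(2) fin unfolding w_def by (intro Max_ge) (auto simp: W_def)
        with step.hyps(1) show False by simp
      qed
      with step.IH show ?case using changes by metis
    qed simp
    with \<open>w \<in> W\<close> show ?thesis by (metis image_eqI)
  qed
  then have "card (f ` V) \<le> card (f ` W)"
    using assms(1) by (intro card_mono) (auto simp: W_def)
  also have "\<dots> \<le> card W"
    using assms(1) by (intro card_image_le) (simp add: W_def)
  also have "\<dots> \<le> card (Suc ` B) + 1"
    using assms(1) by (simp add: W_def card_insert_if)
  also have "card (Suc ` B) = card B"
    by (simp add: card_image)
  finally show ?thesis .
qed

lemma Youngs_inequality_powr:
  fixes a x y :: real
  assumes "a > 1" "x \<ge> 0" "y \<ge> 0"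
  shows "y * (a * x powr (1 / a) - (a - 1) * y powr (1 / (a - 1))) \<le> x"
proof (cases "x = 0 \<or> y = 0")
  case True
  then show ?thesis
    using assms by auto
next
  case False
  with assms have "x > 0" "y > 0"
    by auto
  define b where "b = y powr (a / (a - 1))"
  have "b > 0"
    using \<open>y > 0\<close> by (simp add: b_def)
  have "b powr ((a - 1) / a) = y"
    using assms \<open>y > 0\<close> by (simp add: b_def powr_powr)
  moreover have "b = y * y powr (1 / (a - 1))"
  proof -
    have "a / (a - 1) = 1 + 1 / (a - 1)"
      using assms(1) by (simp add: field_simps)
    then show ?thesis
      using \<open>y > 0\<close> by (simp add: b_def powr_add)
  qed
  moreover have "x powr (1 / a) * b powr ((a - 1) / a) \<le> (1 / a) * x + ((a - 1) / a) * b"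
    by (rule Youngs_inequality_0) (use assms \<open>x > 0\<close> \<open>b > 0\<close> in \<open>auto simp: field_simps\<close>)
  ultimately have "a * (x powr (1 / a) * y) \<le> x + (a - 1) * (y * y powr (1 / (a - 1)))"
    using assms(1) by (simp add: field_simps)
  then show ?thesis
    by (simp add: algebra_simps)
qed

lemma sum_max_le:
  fixes y :: "'a \<Rightarrow> real" and c :: nat
  assumes "finite Hs" "(\<Sum>H\<in>Hs. y H) = x" "\<forall>H\<in>Hs. y H \<ge> 0" "card Hs \<le> 2 * c + 1"
    and "0 \<le> b" "b \<le> x / 4"
  shows "(\<Sum>H\<in>Hs. max (y H) b) \<le> x * c + x"
proof (cases "c = 0")
  case True
  with assms(1,4) have "Hs = {} \<or> (\<exists>H. Hs = {H})"
    by (metis card_0_eq card_1_singletonE le_neq_implies_less less_one mult_0_right add_0)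
  then show ?thesis
    using assms(2,5,6) by auto
next
  case False
  have "(\<Sum>H\<in>Hs. max (y H) b) \<le> (\<Sum>H\<in>Hs. y H + x / 4)"
    using assms(3,5,6) by (intro sum_mono) auto
  also have "\<dots> = x + card Hs * (x / 4)"
    using assms(2) by (simp add: sum.distrib)
  also have "\<dots> \<le> x + (2 * c + 1) * (x / 4)"
    using assms(4-6) by (intro add_left_mono mult_right_mono) auto
  also have "\<dots> \<le> x * c + x"
    using False assms(5,6) mult_left_mono[of 1 "2 * real c" x] by (simp add: field_simps)
  finally show ?thesis .
qed

lemma (in prob_space) exists_nn_integral_ge_of_pointwise_bound:
  fixes N :: "'i set" and S :: "'i \<Rightarrow> 'a set" and f :: "'i \<Rightarrow> 'a \<Rightarrow> real" and p c K :: real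
  assumes "finite N" "N \<noteq> {}" "0 \<le> p" "0 \<le> c"
    and events: "\<And>v. v \<in> N \<Longrightarrow> S v \<in> events"
    and prob: "\<And>v. v \<in> N \<Longrightarrow> p \<le> prob (S v)"
    and measurable: "\<And>v. v \<in> N \<Longrightarrow> (\<lambda>x. ennreal (f v x)) \<in> borel_measurable M"
    and nonneg: "\<And>v x. 0 \<le> f v x"
    and pointwise: "\<And>x. x \<in> space M \<Longrightarrow>
      K * card {v \<in> N. x \<in> S v} \<le> (\<Sum>v\<in>N. f v x) + card N * c"
  shows "\<exists>v\<in>N. ennreal (p * K - c) \<le> (\<integral>\<^sup>+ x. ennreal (f v x) \<partial>M)"
proof (cases "K \<le> 0")
  case True
  then have "p * K - c \<le> 0"
    using mult_nonneg_nonpos[OF assms(3) True] assms(4) by linarith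
  then show ?thesis
    using assms(2) by (auto simp: ennreal_neg)
next
  case False
  define I where "I v = (\<integral>\<^sup>+ x. ennreal (f v x) \<partial>M)" for v
  obtain w where "w \<in> N" and w_max: "\<And>v. v \<in> N \<Longrightarrow> I v \<le> I w"
    using Max_in[of "I ` N"] Max_ge[of "I ` N"] assms(1,2) by fastforce
  have "of_nat (card N) * ennreal (p * K) = (\<Sum>v\<in>N. ennreal K * ennreal p)"
    using False assms(3) by (simp add: ennreal_mult mult.commute)
  also have "\<dots> \<le> (\<Sum>v\<in>N. ennreal K * emeasure M (S v))"
    using prob by (intro sum_mono mult_left_mono) (auto simp: emeasure_eq_measure)
  also have "\<dots> = (\<integral>\<^sup>+ x. ennreal K * (\<Sum>v\<in>N. indicator (S v) x) \<partial>M)"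
    using events by (simp add: nn_integral_cmult nn_integral_sum sum_distrib_left)
  also have "\<dots> \<le> (\<integral>\<^sup>+ x. (\<Sum>v\<in>N. ennreal (f v x)) + ennreal (card N * c) \<partial>M)"
  proof (rule nn_integral_mono)
    fix x assume "x \<in> space M"
    have "ennreal K * (\<Sum>v\<in>N. indicator (S v) x) = ennreal (K * card {v \<in> N. x \<in> S v})"
      using False assms(1) by (simp add: indicator_def ennreal_mult Int_def ennreal_of_nat_eq_real_of_nat)
    also have "\<dots> \<le> ennreal ((\<Sum>v\<in>N. f v x) + card N * c)"
      using pointwise[OF \<open>x \<in> space M\<close>] by (rule ennreal_leI)
    also have "\<dots> = (\<Sum>v\<in>N. ennreal (f v x)) + ennreal (card N * c)"
      using nonneg assms(4) by (simp add: ennreal_plus sum_nonneg sum_ennreal)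
    finally show "ennreal K * (\<Sum>v\<in>N. indicator (S v) x)
        \<le> (\<Sum>v\<in>N. ennreal (f v x)) + ennreal (card N * c)" .
  qed
  also have "\<dots> = (\<Sum>v\<in>N. I v) + ennreal (card N * c)"
    using measurable by (simp add: nn_integral_add nn_integral_sum emeasure_space_1 I_def)
  also have "\<dots> \<le> of_nat (card N) * (ennreal c + I w)"
    using sum_bounded_above[of N I "I w"] w_max assms(4)
    by (simp add: distrib_left ennreal_mult ennreal_of_nat_eq_real_of_nat add_right_mono add.commute)
  finally have "ennreal (p * K) \<le> ennreal c + I w"
    using assms(1,2) by (subst (asm) ennreal_mult_le_mult_iff) auto
  then have "ennreal (p * K) - ennreal c \<le> I w"
    by (simp add: ennreal_minus_le_iff)
  then have "ennreal (p * K - c) \<le> I w"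
    using assms(4) by (simp add: ennreal_minus)
  with \<open>w \<in> N\<close> show ?thesis
    by (auto simp: I_def)
qed

definition hard_input :: "nat \<Rightarrow> nat \<Rightarrow> nat \<Rightarrow> nat" where
  "hard_input n v j = (if j = 0 then v else if j < n then (if j < v then j else Suc j) else 0)"

lemma hard_input_in_inputs:
  assumes "1 \<le> v" "v \<le> n"
  shows "hard_input n v \<in> inputs n"
proof -
  have inj: "inj_on (hard_input n v) {..<n}"
    by (auto simp: inj_on_def hard_input_def split: if_splits)
  have sub: "hard_input n v ` {..<n} \<subseteq> {1..n}"
    using assms by (auto simp: hard_input_def)
  have "hard_input n v ` {..<n} = {1..n}"
    by (rule card_subset_eq) (use card_image[OF inj] sub in auto)
  then show ?thesis
    using inj assms by (auto simp: inputs_def bij_betw_def hard_input_def)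
qed

fun breakpoints :: "nat \<times> nat \<Rightarrow> nat set" where
  "breakpoints (j, m) = (if j = 0 then {m - 1, m} else {j})"

lemma finite_breakpoints [simp]: "finite (breakpoints q)"
  by (cases q) simp

lemma card_breakpoints_le: "card (breakpoints q) \<le> 2"
  by (cases q) (simp add: card_insert_le_m1)

lemma answer_hard_input_Suc_eq:
  assumes "v \<notin> breakpoints q"
  shows "answer (hard_input n (Suc v)) q = answer (hard_input n v) q"
proof -
  obtain j m where "q = (j, m)"
    by fastforce
  with assms show ?thesis
    by (auto simp: answer_def cmp_nat_def hard_input_def split: if_splits)
qed

definition hard_hist :: "alg \<Rightarrow> nat \<Rightarrow> nat \<Rightarrow> nat \<Rightarrow> (nat \<times> nat \<rightharpoonup> cmp)" where
  "hard_hist A n r v = hist A (hard_input n v) 0 r"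

lemma hard_hist_Suc:
  "hard_hist A n (Suc r) v =
     hard_hist A n r v ++ (Some \<circ> answer (hard_input n v)) |` queries A r 0 (hard_hist A n r v)"
  by (simp add: hard_hist_def Let_def restrict_map_def comp_def)

lemma card_hard_hist_Suc_image_le:
  assumes "valid_alg A" and "\<forall>v\<in>V. hard_hist A n r v = h"
  shows "card (hard_hist A n (Suc r) ` V) \<le> 2 * card (queries A r 0 h) + 1"
proof -
  define Q where "Q = queries A r 0 h"
  define f where "f v = h ++ (Some \<circ> answer (hard_input n v)) |` Q" for v
  have "finite Q"
    using assms(1) by (simp add: valid_alg_def Q_def)
  have "hard_hist A n (Suc r) ` V = f ` V"
    using assms(2) by (auto simp: hard_hist_Suc f_def Q_def)
  also have "card (f ` V) \<le> card (\<Union>q\<in>Q. breakpoints q) + 1"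
  proof (rule card_image_le_card_changes)
    show "finite (\<Union>q\<in>Q. breakpoints q)"
      using \<open>finite Q\<close> by simp
    show "u \<in> (\<Union>q\<in>Q. breakpoints q)" if "f (Suc u) \<noteq> f u" for u
    proof (rule ccontr)
      assume "u \<notin> (\<Union>q\<in>Q. breakpoints q)"
      then have "\<forall>q\<in>Q. answer (hard_input n (Suc u)) q = answer (hard_input n u) q"
        using answer_hard_input_Suc_eq by blast
      then have "(Some \<circ> answer (hard_input n (Suc u))) |` Q = (Some \<circ> answer (hard_input n u)) |` Q"
        by (simp add: restrict_map_def fun_eq_iff)
      then have "f (Suc u) = f u"
        by (simp add: f_def)
      with that show False ..
    qed
  qed
  also have "card (\<Union>q\<in>Q. breakpoints q) \<le> (\<Sum>q\<in>Q. card (breakpoints q))"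
    using \<open>finite Q\<close> by (rule card_UN_le)
  also have "\<dots> \<le> 2 * card Q"
    using sum_bounded_above[of Q "\<lambda>q. card (breakpoints q)" 2] card_breakpoints_le
    by (simp add: mult.commute)
  finally show ?thesis
    by (simp add: Q_def)
qed


definition query_bound :: "nat \<Rightarrow> real \<Rightarrow> real" where
  "query_bound m x = real m * x powr (1 / real m) / (4 * exp 1) - real m"

lemma query_bound_one_le:
  fixes x S :: real and c :: nat
  assumes "x \<ge> 0" "0 \<le> S" "S \<le> 2 * c + 1"
  shows "S * query_bound 1 x \<le> x * c + x"
proof -
  have "S * query_bound 1 x \<le> S * x / (4 * exp 1)"
    using assms by (simp add: query_bound_def algebra_simps)
  also have "\<dots> \<le> (2 * c + 1) * x / (4 * exp 1)"
    using assms by (intro divide_right_mono mult_right_mono) auto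
  also have "\<dots> \<le> (2 * c + 1) * x / 4"
    using assms(1) by (intro divide_left_mono) auto
  also have "\<dots> \<le> x * c + x"
    using assms(1) by (simp add: field_simps)
  finally show ?thesis .
qed

lemma query_bound_Suc_le:
  fixes x y S T :: real
  assumes "1 \<le> m" "0 \<le> x" "0 \<le> S" "S \<le> y"
    and IH: "S * query_bound m y \<le> T + y"
  shows "S * query_bound (Suc m) x \<le> T + max y (x / (4 * exp 1))"
proof (cases "query_bound (Suc m) x \<le> query_bound m y")
  case True
  then have "S * query_bound (Suc m) x \<le> S * query_bound m y"
    using assms(3) by (rule mult_left_mono)
  with IH show ?thesis
    by linarith
next
  case False
  have "y * (query_bound (Suc m) x - query_bound m y)
      = y * ((m + 1) * x powr (1 / (m + 1)) - m * y powr (1 / m)) / (4 * exp 1) - y"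
    by (simp add: query_bound_def field_simps)
  also have "\<dots> \<le> x / (4 * exp 1) - y"
    using Youngs_inequality_powr[of "m + 1" x y] assms by (simp add: divide_right_mono)
  finally have "y * (query_bound (Suc m) x - query_bound m y) \<le> x / (4 * exp 1) - y" .
  moreover have "S * (query_bound (Suc m) x - query_bound m y)
      \<le> y * (query_bound (Suc m) x - query_bound m y)"
    using False assms(4) by (intro mult_right_mono) auto
  ultimately show ?thesis
    using IH by (simp add: algebra_simps)
qed

definition successes :: "alg \<Rightarrow> nat \<Rightarrow> nat \<Rightarrow> nat set \<Rightarrow> nat" where
  "successes A n k V = card {v \<in> V. succeeds A k (hard_input n v) 0}"

definition remaining_cost :: "alg \<Rightarrow> nat \<Rightarrow> nat \<Rightarrow> nat \<Rightarrow> nat set \<Rightarrow> nat" where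
  "remaining_cost A n k r V = (\<Sum>v\<in>V. \<Sum>t\<in>{r..<k}. card (queries A t 0 (hard_hist A n t v)))"

lemma successes_eq_sum:
  "finite V \<Longrightarrow> successes A n k V = (\<Sum>v\<in>V. of_bool (succeeds A k (hard_input n v) 0))"
  by (simp add: successes_def Int_def)

lemma successes_le_card: "finite V \<Longrightarrow> successes A n k V \<le> card V"
  by (simp add: successes_def card_mono)

lemma successes_eq_sum_fibres:
  assumes "finite V"
  shows "successes A n k V = (\<Sum>H\<in>g ` V. successes A n k {v \<in> V. g v = H})"
proof -
  have "successes A n k V = (\<Sum>v\<in>V. of_bool (succeeds A k (hard_input n v) 0))"
    using assms by (rule successes_eq_sum)
  also have "\<dots> = (\<Sum>H\<in>g ` V. \<Sum>v\<in>{v \<in> V. g v = H}. of_bool (succeeds A k (hard_input n v) 0))"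
    using assms by (rule sum.image_gen)
  also have "\<dots> = (\<Sum>H\<in>g ` V. successes A n k {v \<in> V. g v = H})"
    using assms by (intro sum.cong refl successes_eq_sum[symmetric]) simp
  finally show ?thesis .
qed

lemma remaining_cost_eq_sum_fibres:
  "finite V \<Longrightarrow> remaining_cost A n k r V = (\<Sum>H\<in>g ` V. remaining_cost A n k r {v \<in> V. g v = H})"
  unfolding remaining_cost_def by (rule sum.image_gen)

lemma successes_le_card_hard_hist_image:
  assumes "finite V"
  shows "successes A n k V \<le> card (hard_hist A n k ` V)"
proof -
  have "out A 0 (hard_hist A n k v) = v" if "succeeds A k (hard_input n v) 0" for v
    using that by (simp add: succeeds_def hard_hist_def hard_input_def)
  then have "inj_on (hard_hist A n k) {v \<in> V. succeeds A k (hard_input n v) 0}"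
    by (metis (mono_tags, lifting) inj_onI mem_Collect_eq)
  then have "successes A n k V = card (hard_hist A n k ` {v \<in> V. succeeds A k (hard_input n v) 0})"
    by (simp add: successes_def card_image)
  also have "\<dots> \<le> card (hard_hist A n k ` V)"
    using assms by (intro card_mono) auto
  finally show ?thesis .
qed

lemma remaining_cost_split:
  assumes "r < k" and "\<forall>v\<in>V. hard_hist A n r v = h"
  shows "remaining_cost A n k r V = card V * card (queries A r 0 h) + remaining_cost A n k (Suc r) V"
proof -
  have "remaining_cost A n k r V
      = (\<Sum>v\<in>V. card (queries A r 0 h) + (\<Sum>t\<in>{Suc r..<k}. card (queries A t 0 (hard_hist A n t v))))"
    unfolding remaining_cost_def using assms by (intro sum.cong) (auto simp: sum.atLeast_Suc_lessThan)
  then show ?thesis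
    by (simp add: sum.distrib remaining_cost_def)
qed

lemma successes_query_bound_one_le:
  assumes "valid_alg A" and "Suc r = k" and "finite V" and "\<forall>v\<in>V. hard_hist A n r v = h"
  shows "successes A n k V * query_bound 1 (card V) \<le> real (remaining_cost A n k r V) + card V"
proof -
  define c where "c = card (queries A r 0 h)"
  have "remaining_cost A n k r V = card V * c"
    using remaining_cost_split[of r k V A n h] assms(2,4) by (simp add: c_def remaining_cost_def)
  moreover have "successes A n k V \<le> 2 * c + 1"
    using successes_le_card_hard_hist_image[OF assms(3), of A n k]
      card_hard_hist_Suc_image_le[OF assms(1,4)] assms(2)
    by (simp add: c_def)
  ultimately show ?thesis
    using query_bound_one_le[of "card V" "successes A n k V" c] by (simp add: algebra_simps)
qed

lemma successes_query_bound_Suc_le: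
  assumes "valid_alg A" and "r < k" and "finite V" and "\<forall>v\<in>V. hard_hist A n r v = h" and "1 \<le> m"
    and IH: "\<And>W H. W \<subseteq> V \<Longrightarrow> \<forall>v\<in>W. hard_hist A n (Suc r) v = H \<Longrightarrow>
      successes A n k W * query_bound m (card W) \<le> real (remaining_cost A n k (Suc r) W) + card W"
  shows "successes A n k V * query_bound (Suc m) (card V) \<le> real (remaining_cost A n k r V) + card V"
proof -
  define c where "c = card (queries A r 0 h)"
  define Hs where "Hs = hard_hist A n (Suc r) ` V"
  define P where "P H = {v \<in> V. hard_hist A n (Suc r) v = H}" for H
  define x where "x = real (card V)"
  have "successes A n k V * query_bound (Suc m) x
      = (\<Sum>H\<in>Hs. successes A n k (P H) * query_bound (Suc m) x)"
    using successes_eq_sum_fibres[OF assms(3), of A n k "hard_hist A n (Suc r)"]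
    by (simp add: Hs_def P_def sum_distrib_right)
  also have "\<dots> \<le> (\<Sum>H\<in>Hs. remaining_cost A n k (Suc r) (P H) + max (card (P H)) (x / (4 * exp 1)))"
  proof (rule sum_mono)
    fix H
    have "P H \<subseteq> V" and "\<forall>v\<in>P H. hard_hist A n (Suc r) v = H"
      by (auto simp: P_def)
    then have "successes A n k (P H) * query_bound m (card (P H))
        \<le> real (remaining_cost A n k (Suc r) (P H)) + card (P H)"
      by (rule IH)
    moreover have "successes A n k (P H) \<le> card (P H)"
      using assms(3) by (intro successes_le_card) (simp add: P_def)
    ultimately show "successes A n k (P H) * query_bound (Suc m) x
        \<le> remaining_cost A n k (Suc r) (P H) + max (card (P H)) (x / (4 * exp 1))"
      using query_bound_Suc_le[OF assms(5)] by (simp add: x_def)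
  qed
  also have "\<dots> = remaining_cost A n k (Suc r) V + (\<Sum>H\<in>Hs. max (card (P H)) (x / (4 * exp 1)))"
    using remaining_cost_eq_sum_fibres[OF assms(3), of A n k "Suc r" "hard_hist A n (Suc r)"]
    by (simp add: sum.distrib Hs_def P_def)
  also have "(\<Sum>H\<in>Hs. max (card (P H)) (x / (4 * exp 1))) \<le> x * c + x"
  proof (rule sum_max_le)
    show "finite Hs"
      using assms(3) by (simp add: Hs_def)
    show "(\<Sum>H\<in>Hs. real (card (P H))) = x"
      using sum.image_gen[OF assms(3), of "\<lambda>_. 1::real" "hard_hist A n (Suc r)"]
      by (simp add: x_def Hs_def P_def)
    show "card Hs \<le> 2 * c + 1"
      using card_hard_hist_Suc_image_le[OF assms(1,4)] by (simp add: c_def Hs_def)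
    show "x / (4 * exp 1) \<le> x / 4"
      by (intro divide_left_mono) (auto simp: x_def)
  qed (simp_all add: x_def)
  moreover have "remaining_cost A n k r V = card V * c + remaining_cost A n k (Suc r) V"
    using remaining_cost_split[OF assms(2,4)] by (simp add: c_def)
  ultimately show ?thesis
    by (simp add: x_def algebra_simps)
qed

lemma successes_query_bound_le:
  assumes "valid_alg A" and "r + Suc m = k" and "finite V" and "\<forall>v\<in>V. hard_hist A n r v = h"
  shows "successes A n k V * query_bound (Suc m) (card V) \<le> real (remaining_cost A n k r V) + card V"
  using assms(2-4)
proof (induction m arbitrary: r V h)
  case 0
  then show ?case
    using successes_query_bound_one_le[OF assms(1)] by simp
next
  case (Suc m)
  show ?case
  proof (rule successes_query_bound_Suc_le[OF assms(1) _ Suc.prems(2,3)])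
    show "successes A n k W * query_bound (Suc m) (card W) \<le> real (remaining_cost A n k (Suc r) W) + card W"
      if "W \<subseteq> V" and "\<forall>v\<in>W. hard_hist A n (Suc r) v = H" for W H
      using Suc.IH[of "Suc r" W H] Suc.prems(1,2) that finite_subset by auto
  qed (use Suc.prems(1) in auto)
qed

lemma query_bound_successes_le_cost:
  assumes "valid_alg A" and "1 \<le> k"
  shows "query_bound k n * successes A n k {1..n}
    \<le> (\<Sum>v\<in>{1..n}. real (cost A k (hard_input n v) 0)) + real n"
proof -
  have "remaining_cost A n k 0 {1..n} = (\<Sum>v\<in>{1..n}. cost A k (hard_input n v) 0)"
    by (simp add: remaining_cost_def cost_def hard_hist_def atLeast0LessThan)
  then show ?thesis
    using successes_query_bound_le[OF assms(1), of 0 "k - 1" k "{1..n}" n Map.empty] assms(2)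
    by (simp add: hard_hist_def mult.commute)
qed

theorem proposition3:
  fixes n k :: nat and p :: real and M :: "alg measure"
  assumes "n > 1" and "1 \<le> k" and "k \<le> nat \<lceil>log 2 (real n)\<rceil>"
    and "0 \<le> p" and "p \<le> 1"
    and "prob_space M"
    and "\<forall>A\<in>space M. valid_alg A"
    and "\<forall>\<sigma> i. (\<lambda>A. ennreal (real (cost A k \<sigma> i))) \<in> borel_measurable M"
    and "\<forall>\<sigma>\<in>inputs n. \<forall>i<n. {A \<in> space M. succeeds A k \<sigma> i} \<in> sets M
                          \<and> measure M {A \<in> space M. succeeds A k \<sigma> i} \<ge> p"
  shows "\<exists>\<sigma>\<in>inputs n. \<exists>i<n.
           (\<integral>\<^sup>+ A. ennreal (real (cost A k \<sigma> i)) \<partial>M)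
             \<ge> ennreal (real k / (4 * exp 1) * p * real n powr (1 / real k) - 1 - p * real k)"
proof -
  interpret prob_space M
    by (fact assms(6))
  define S where "S v = {A \<in> space M. succeeds A k (hard_input n v) 0}" for v
  have hard: "hard_input n v \<in> inputs n" if "v \<in> {1..n}" for v
    using that by (intro hard_input_in_inputs) auto
  have "\<exists>v\<in>{1..n}.
      ennreal (p * query_bound k n - 1)
        \<le> (\<integral>\<^sup>+ A. ennreal (real (cost A k (hard_input n v) 0)) \<partial>M)"
  proof (rule exists_nn_integral_ge_of_pointwise_bound)
    show "S v \<in> events" "p \<le> prob (S v)" if "v \<in> {1..n}" for v
      using assms(1,9) hard[OF that] by (auto simp: S_def)
    show "query_bound k n * card {v \<in> {1..n}. A \<in> S v}
        \<le> (\<Sum>v\<in>{1..n}. real (cost A k (hard_input n v) 0)) + real (card {1..n}) * 1"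
      if "A \<in> space M" for A
      using query_bound_successes_le_cost[of A k n] assms(2,7) that by (simp add: S_def successes_def)
  qed (use assms in auto)
  then obtain v where "v \<in> {1..n}" and
    "ennreal (p * query_bound k n - 1)
      \<le> (\<integral>\<^sup>+ A. ennreal (real (cost A k (hard_input n v) 0)) \<partial>M)"
    by blast
  moreover have "p * query_bound k n - 1 = real k / (4 * exp 1) * p * real n powr (1 / real k) - 1 - p * real k"
    by (simp add: query_bound_def algebra_simps)
  ultimately show ?thesis
    using hard[OF \<open>v \<in> {1..n}\<close>] assms(1) by (intro bexI[of _ "hard_input n v"] exI[of _ 0]) auto
qed

end
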